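(* Let $g:\mathbb{C}\to\mathbb{C}$ be a harmonic map (real and imaginary parts harmonic) such that $\mathcal{D}(g(\mathbb{C}))$ contains no pair of antipodal points. Then there exist $\theta\in[0,2\pi)$, $\rho>0$ and $a>1$ such that, writing $f=e^{i\theta}g$ and $\mathcal{R}_f=f(\mathbb{C})$, $$\mathcal{R}_f\subset\overline{D}(0,\rho)\cup\Big(\{u+iv:\ |v|\le a|u|\}\setminus\{u+iv:\ |v|\le -\tfrac{1}{a}u\}\Big).$$
   Context: $\partial\mathbb{D}$ is the unit circle. For $\mathcal{R}\subset\mathbb{C}$, $e^{i\theta}\in\partial\mathbb{D}$ is an asymptotic direction of $\mathcal{R}$ if there exist $w_n\in\mathcal{R}$ and $\varepsilon_n>0$, $\varepsilon_n\to0$, with $\varepsilon_n w_n\to e^{i\theta}$; $\mathcal{D}(\mathcal{R})$ is the set of asymptotic directions. *)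

theory Defs
  imports "HOL-Analysis.Analysis"
begin

definition harmonic :: "(complex \<Rightarrow> real) \<Rightarrow> bool" where
  "harmonic u \<longleftrightarrow>
     (\<exists>(Du :: complex \<Rightarrow> complex \<Rightarrow>\<^sub>L real) (D2u :: complex \<Rightarrow> complex \<Rightarrow>\<^sub>L (complex \<Rightarrow>\<^sub>L real)).
        (\<forall>z. (u has_derivative blinfun_apply (Du z)) (at z)) \<and>
        (\<forall>z. (Du has_derivative blinfun_apply (D2u z)) (at z)) \<and>
        continuous_on UNIV D2u \<and>
        (\<forall>z. blinfun_apply (blinfun_apply (D2u z) 1) 1
              + blinfun_apply (blinfun_apply (D2u z) \<i>) \<i> = 0))"

definition harmonic_map :: "(complex \<Rightarrow> complex) \<Rightarrow> bool" where
  "harmonic_map g \<longleftrightarrow> harmonic (\<lambda>z. Re (g z)) \<and> harmonic (\<lambda>z. Im (g z))"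

definition asym_dirs :: "complex set \<Rightarrow> complex set" where
  "asym_dirs R = {w. cmod w = 1 \<and>
     (\<exists>(wn :: nat \<Rightarrow> complex) (eps :: nat \<Rightarrow> real).
        (\<forall>n. wn n \<in> R \<and> eps n > 0) \<and> eps \<longlonglongrightarrow> 0 \<and>
        (\<lambda>n. complex_of_real (eps n) * wn n) \<longlonglongrightarrow> w)}"

end

theory Submission
  imports Defs
begin

text \<open>The
  directions in which R goes to infinity form a closed subset C of the unit circle with
  C \<inter> -C = {}. By connectedness of the circle, C \<union> -C is not all of it, and this yields a unit
  vector p with p, ip, -ip all outside C. After the rotation taking p to -1, every point of R of
  large modulus has its direction bounded away from -1 and from \<plusminus>i, hence lies in the region
  |v| \<le> a|u| minus the thin left cone |v| \<le> -u/a, once a is large.\<close>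

definition limit_directions :: "complex set \<Rightarrow> complex set" where
  "limit_directions R = sphere 0 1 \<inter> (\<Inter>\<rho>. closure (sgn ` {z \<in> R. \<rho> < cmod z}))"

definition cone_region :: "real \<Rightarrow> complex set" where
  "cone_region a = {w. \<bar>Im w\<bar> \<le> a * \<bar>Re w\<bar>} - {w. \<bar>Im w\<bar> \<le> - (1 / a) * Re w}"

lemma closed_limit_directions: "closed (limit_directions R)"
  unfolding limit_directions_def by (intro closed_Int closed_sphere closed_INT) auto

lemma limit_directions_subset_asym_dirs: "limit_directions R \<subseteq> asym_dirs R"
proof
  fix w assume w: "w \<in> limit_directions R"
  have "\<exists>z. z \<in> R \<and> real n + 1 < cmod z \<and> dist (sgn z) w < 1 / real (Suc n)" for n
  proof -
    have "w \<in> closure (sgn ` {z \<in> R. real n + 1 < cmod z})"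
      using w by (auto simp: limit_directions_def)
    then show ?thesis
      by (auto simp: closure_approachable simp del: of_nat_Suc)
  qed
  then obtain z where z: "\<And>n. z n \<in> R" "\<And>n. real n + 1 < cmod (z n)"
    "\<And>n. dist (sgn (z n)) w < 1 / real (Suc n)"
    by metis
  define eps where "eps n = 1 / cmod (z n)" for n
  have "cmod (z n) > 0" for n
    using z(2)[of n] of_nat_0_le_iff[of n] by linarith
  then have eps_pos: "eps n > 0" for n
    by (simp add: eps_def)
  have "norm (eps n) < 1 / real (Suc n)" for n
    using z(2)[of n] by (simp add: eps_def frac_less2)
  then have "eps \<longlonglongrightarrow> 0"
    by (rule LIMSEQ_norm_0)
  moreover have "(\<lambda>n. complex_of_real (eps n) * z n) \<longlonglongrightarrow> w"
  proof -
    have sgn_eq: "complex_of_real (eps n) * z n = sgn (z n)" for n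
      by (simp add: eps_def sgn_div_norm scaleR_conv_of_real divide_inverse)
    have "(\<lambda>n. sgn (z n) - w) \<longlonglongrightarrow> 0"
      by (rule LIMSEQ_norm_0) (use z(3) in \<open>simp add: dist_norm\<close>)
    then have "(\<lambda>n. sgn (z n)) \<longlonglongrightarrow> w"
      by (rule LIM_zero_cancel)
    then show ?thesis
      by (simp add: sgn_eq)
  qed
  ultimately show "w \<in> asym_dirs R"
    using w z(1) eps_pos by (auto simp: asym_dirs_def limit_directions_def)
qed

lemma limit_directions_isolated:
  assumes "cmod q = 1" "q \<notin> limit_directions R"
  obtains \<delta> \<rho> where "\<delta> > 0" "\<And>z. z \<in> R \<Longrightarrow> \<rho> < cmod z \<Longrightarrow> \<delta> \<le> cmod (sgn z - q)"
proof -
  obtain \<rho> where "q \<notin> closure (sgn ` {z \<in> R. \<rho> < cmod z})"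
    using assms by (auto simp: limit_directions_def)
  then obtain \<delta> where "\<delta> > 0" "\<And>z. z \<in> R \<Longrightarrow> \<rho> < cmod z \<Longrightarrow> \<delta> \<le> dist (sgn z) q"
    unfolding closure_approachable by (auto simp: not_less) (meson not_less)
  then show thesis
    using that by (auto simp: dist_norm)
qed

lemma unit_vector_avoiding_quarter_turns:
  fixes C :: "complex set"
  assumes "closed C" and no_antipodes: "\<And>w. w \<in> C \<Longrightarrow> - w \<notin> C"
  obtains p where "cmod p = 1" "p \<notin> C" "\<i> * p \<notin> C" "- (\<i> * p) \<notin> C"
proof (rule ccontr)
  assume "\<not> thesis"
  with that have covered: "\<And>p. cmod p = 1 \<Longrightarrow> p \<in> C \<or> \<i> * p \<in> C \<or> - (\<i> * p) \<in> C"
    by blast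
  have neg_mem: "x \<in> uminus ` C \<longleftrightarrow> - x \<in> C" for x
    by (auto simp: image_iff) (metis minus_minus)
  have cover: "sphere 0 1 \<subseteq> C \<union> uminus ` C"
  proof
    fix x :: complex assume x: "x \<in> sphere 0 1"
    show "x \<in> C \<union> uminus ` C"
    proof (rule ccontr)
      assume "x \<notin> C \<union> uminus ` C"
      then have "x \<notin> C" "- x \<notin> C"
        by (simp_all add: neg_mem)
      then have "\<i> * x \<in> C" "- (\<i> * x) \<in> C"
        using covered[of "\<i> * x"] covered[of "- (\<i> * x)"] x by (simp_all add: norm_mult)
      then show False
        using no_antipodes by blast
    qed
  qed
  have "closed (uminus ` C)"
    using closed_negations[OF \<open>closed C\<close>] by simp
  moreover have "C \<inter> uminus ` C \<inter> sphere 0 1 = {}"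
    using no_antipodes by (auto simp: neg_mem)
  ultimately have "C \<inter> sphere 0 1 = {} \<or> uminus ` C \<inter> sphere 0 1 = {}"
    using connected_closedD[OF connected_sphere[of "0::complex" 1] _ cover \<open>closed C\<close>] by simp
  moreover have "1 \<in> C \<union> uminus ` C" "-1 \<in> C \<union> uminus ` C"
    using subsetD[OF cover, of 1] subsetD[OF cover, of "-1"] by simp_all
  ultimately show False
    using no_antipodes[of 1] by (auto simp: neg_mem)
qed

lemma sq_one_minus_le_sq_of_unit:
  fixes s t :: real
  assumes "s \<ge> 0" "t \<ge> 0" "s\<^sup>2 + t\<^sup>2 = 1"
  shows "(1 - t)\<^sup>2 \<le> s\<^sup>2"
proof -
  have "t\<^sup>2 \<le> 1"
    using assms(3) zero_le_power2[of s] by linarith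
  then have "t \<le> 1"
    using power2_le_imp_le[of t 1] by simp
  then have "t * t \<le> 1 * t" "(1 - t) * (1 - t) \<le> 1 * (1 - t)"
    using \<open>t \<ge> 0\<close> by (intro mult_right_mono; simp)+
  then show ?thesis
    using assms(3) by (simp add: power2_eq_square)
qed

lemma unit_circle_steep_near_poles:
  fixes u v a d :: real
  assumes "u\<^sup>2 + v\<^sup>2 = 1" "a > 0" "2 \<le> a * d"
    and "d\<^sup>2 \<le> u\<^sup>2 + (v - 1)\<^sup>2" "d\<^sup>2 \<le> u\<^sup>2 + (v + 1)\<^sup>2"
  shows "\<bar>v\<bar> \<le> a * \<bar>u\<bar>"
proof (rule ccontr)
  assume "\<not> \<bar>v\<bar> \<le> a * \<bar>u\<bar>"
  then have "(a * \<bar>u\<bar>)\<^sup>2 < \<bar>v\<bar>\<^sup>2"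
    using \<open>a > 0\<close> by (intro power_strict_mono) auto
  then have "a\<^sup>2 * u\<^sup>2 < v\<^sup>2"
    by (simp add: power_mult_distrib)
  then have au: "a\<^sup>2 * u\<^sup>2 \<le> 1"
    using assms(1) zero_le_power2[of u] by linarith
  have "d\<^sup>2 \<le> u\<^sup>2 + (1 - \<bar>v\<bar>)\<^sup>2"
  proof (cases "v \<ge> 0")
    case True
    then show ?thesis using assms(4) by (simp add: power2_commute)
  next
    case False
    then show ?thesis using assms(5) by (simp add: add.commute)
  qed
  moreover have "(1 - \<bar>v\<bar>)\<^sup>2 \<le> u\<^sup>2"
    using sq_one_minus_le_sq_of_unit[of "\<bar>u\<bar>" "\<bar>v\<bar>"] assms(1) by simp
  ultimately have "d\<^sup>2 \<le> 2 * u\<^sup>2"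
    by linarith
  have "(2::real)\<^sup>2 \<le> (a * d)\<^sup>2"
    using assms(3) by (intro power_mono) auto
  also have "\<dots> = a\<^sup>2 * d\<^sup>2"
    by (rule power_mult_distrib)
  also have "\<dots> \<le> a\<^sup>2 * (2 * u\<^sup>2)"
    using \<open>d\<^sup>2 \<le> 2 * u\<^sup>2\<close> by (rule mult_left_mono) simp
  also have "\<dots> \<le> 2"
    using au by simp
  finally show False
    by simp
qed

lemma unit_circle_outside_left_cone:
  fixes u v a d :: real
  assumes "u\<^sup>2 + v\<^sup>2 = 1" "a > 0" "2 \<le> a * d" "d\<^sup>2 \<le> (1 + u)\<^sup>2 + v\<^sup>2"
  shows "\<not> \<bar>v\<bar> \<le> - (1 / a) * u"
proof
  assume "\<bar>v\<bar> \<le> - (1 / a) * u"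
  then have "a * \<bar>v\<bar> \<le> a * (- (1 / a) * u)"
    using \<open>a > 0\<close> by (intro mult_left_mono) simp_all
  also have "\<dots> = - u"
    using \<open>a > 0\<close> by simp
  finally have av: "a * \<bar>v\<bar> \<le> - u" .
  have "0 \<le> a * \<bar>v\<bar>"
    using \<open>a > 0\<close> by simp
  then have "u \<le> 0" "(a * \<bar>v\<bar>)\<^sup>2 \<le> (- u)\<^sup>2"
    using av power_mono[OF av, of 2] by simp_all
  then have "a\<^sup>2 * v\<^sup>2 \<le> u\<^sup>2"
    by (simp add: power_mult_distrib)
  then have av2: "a\<^sup>2 * v\<^sup>2 \<le> 1"
    using assms(1) zero_le_power2[of v] by linarith
  have "(1 - \<bar>u\<bar>)\<^sup>2 \<le> v\<^sup>2"
    using sq_one_minus_le_sq_of_unit[of "\<bar>v\<bar>" "\<bar>u\<bar>"] assms(1) by simp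
  then have "d\<^sup>2 \<le> 2 * v\<^sup>2"
    using assms(4) \<open>u \<le> 0\<close> by simp
  have "(2::real)\<^sup>2 \<le> (a * d)\<^sup>2"
    using assms(3) by (intro power_mono) auto
  also have "\<dots> = a\<^sup>2 * d\<^sup>2"
    by (rule power_mult_distrib)
  also have "\<dots> \<le> a\<^sup>2 * (2 * v\<^sup>2)"
    using \<open>d\<^sup>2 \<le> 2 * v\<^sup>2\<close> by (rule mult_left_mono) simp
  also have "\<dots> \<le> 2"
    using av2 by simp
  finally show False
    by simp
qed

lemma unit_in_cone_region:
  assumes "cmod e = 1" "a > 0" "2 \<le> a * d"
    and "d \<le> cmod (e + 1)" "d \<le> cmod (e - \<i>)" "d \<le> cmod (e + \<i>)"
  shows "e \<in> cone_region a"
proof -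
  have "0 < a * d"
    using assms(3) by linarith
  then have "d > 0"
    using zero_less_mult_pos[OF _ \<open>a > 0\<close>] by blast
  then have sq: "d\<^sup>2 \<le> (Re q)\<^sup>2 + (Im q)\<^sup>2" if "d \<le> cmod q" for q
    using power_mono[OF that, of 2] by (simp add: cmod_power2)
  have unit: "(Re e)\<^sup>2 + (Im e)\<^sup>2 = 1"
    using assms(1) cmod_power2[of e] by simp
  have "d\<^sup>2 \<le> (1 + Re e)\<^sup>2 + (Im e)\<^sup>2"
    using sq[OF assms(4)] by (simp add: add.commute)
  then have "\<not> \<bar>Im e\<bar> \<le> - (1 / a) * Re e"
    by (rule unit_circle_outside_left_cone[OF unit assms(2,3)])
  moreover have "d\<^sup>2 \<le> (Re e)\<^sup>2 + (Im e - 1)\<^sup>2" "d\<^sup>2 \<le> (Re e)\<^sup>2 + (Im e + 1)\<^sup>2"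
    using sq[OF assms(5)] sq[OF assms(6)] by simp_all
  then have "\<bar>Im e\<bar> \<le> a * \<bar>Re e\<bar>"
    by (rule unit_circle_steep_near_poles[OF unit assms(2,3)])
  ultimately show ?thesis
    by (simp add: cone_region_def)
qed

lemma scaled_mem_cone_region:
  assumes "c > 0" "e \<in> cone_region a"
  shows "complex_of_real c * e \<in> cone_region a"
proof -
  have "c * \<bar>Im e\<bar> \<le> c * (a * \<bar>Re e\<bar>)"
    using assms by (intro mult_left_mono) (simp_all add: cone_region_def)
  moreover have "\<not> c * \<bar>Im e\<bar> \<le> c * (- (1 / a) * Re e)"
    using assms(2) unfolding mult_le_cancel_left_pos[OF \<open>c > 0\<close>] by (simp add: cone_region_def)
  ultimately show ?thesis
    using \<open>c > 0\<close> by (simp add: cone_region_def abs_mult mult_ac)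
qed

lemma rotated_far_point_in_cone_region:
  assumes "cmod r = 1" "r * p = -1" "a > 0" "2 \<le> a * d" "w \<noteq> 0"
    and "d \<le> cmod (sgn w - p)" "d \<le> cmod (sgn w - \<i> * p)" "d \<le> cmod (sgn w + \<i> * p)"
  shows "r * w \<in> cone_region a"
proof -
  define e where "e = r * sgn w"
  have "e + 1 = r * (sgn w - p)" "e + \<i> = r * (sgn w - \<i> * p)" "e - \<i> = r * (sgn w + \<i> * p)"
    using assms(2) by (simp_all add: e_def algebra_simps)
  then have "e \<in> cone_region a"
    using assms by (intro unit_in_cone_region[of e a d]) (simp_all add: e_def norm_mult norm_sgn)
  moreover have "r * w = complex_of_real (cmod w) * e"
    using assms(5) by (simp add: e_def sgn_div_norm scaleR_conv_of_real)
  ultimately show ?thesis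
    using assms(5) by (simp add: scaled_mem_cone_region)
qed

lemma rotation_into_cone_region_avoiding:
  assumes "cmod p = 1" "p \<notin> limit_directions R"
    "\<i> * p \<notin> limit_directions R" "- (\<i> * p) \<notin> limit_directions R"
  obtains \<rho> a where "\<rho> > 0" "a > 1" "\<And>w. w \<in> R \<Longrightarrow> - cnj p * w \<in> cball 0 \<rho> \<union> cone_region a"
proof -
  have "cmod (\<i> * p) = 1" "cmod (- (\<i> * p)) = 1"
    using assms(1) by (simp_all add: norm_mult)
  then obtain d1 \<rho>1 d2 \<rho>2 d3 \<rho>3 where "d1 > 0" "d2 > 0" "d3 > 0"
    and far: "\<And>z. z \<in> R \<Longrightarrow> \<rho>1 < cmod z \<Longrightarrow> d1 \<le> cmod (sgn z - p)"
      "\<And>z. z \<in> R \<Longrightarrow> \<rho>2 < cmod z \<Longrightarrow> d2 \<le> cmod (sgn z - \<i> * p)"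
      "\<And>z. z \<in> R \<Longrightarrow> \<rho>3 < cmod z \<Longrightarrow> d3 \<le> cmod (sgn z + \<i> * p)"
    using limit_directions_isolated[OF assms(1,2)] limit_directions_isolated[OF _ assms(3)]
      limit_directions_isolated[OF _ assms(4)] by (metis diff_minus_eq_add)
  define d where "d = min d1 (min d2 d3)"
  define \<rho> where "\<rho> = max 1 (max \<rho>1 (max \<rho>2 \<rho>3))"
  define a where "a = 2 / d + 2"
  have "d > 0"
    using \<open>d1 > 0\<close> \<open>d2 > 0\<close> \<open>d3 > 0\<close> by (simp add: d_def)
  then have "a > 1" "2 \<le> a * d"
    by (simp_all add: a_def field_simps)
  have "cmod (- cnj p) = 1" "- cnj p * p = -1"
    using assms(1) complex_norm_square[of p] by (simp_all add: mult.commute)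
  have "\<rho> > 0"
    by (simp add: \<rho>_def)
  moreover note \<open>a > 1\<close>
  moreover have "- cnj p * w \<in> cball 0 \<rho> \<union> cone_region a" if "w \<in> R" for w
  proof (cases "cmod w \<le> \<rho>")
    case True
    then show ?thesis
      using \<open>cmod (- cnj p) = 1\<close> by (simp add: norm_mult)
  next
    case False
    then have "w \<noteq> 0" "\<rho>1 < cmod w" "\<rho>2 < cmod w" "\<rho>3 < cmod w"
      by (auto simp: \<rho>_def)
    then have "- cnj p * w \<in> cone_region a"
      using far[OF that] \<open>cmod (- cnj p) = 1\<close> \<open>- cnj p * p = -1\<close> \<open>a > 1\<close> \<open>2 \<le> a * d\<close>
      by (intro rotated_far_point_in_cone_region[of "- cnj p" p a d]) (auto simp: d_def)
    then show ?thesis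
      by simp
  qed
  ultimately show thesis
    by (rule that)
qed

lemma rotation_into_cone_region:
  fixes R :: "complex set"
  assumes "\<not> (\<exists>w. w \<in> asym_dirs R \<and> - w \<in> asym_dirs R)"
  shows "\<exists>\<theta> \<rho> a. 0 \<le> \<theta> \<and> \<theta> < 2 * pi \<and> \<rho> > 0 \<and> a > 1 \<and>
           (\<lambda>w. exp (\<i> * complex_of_real \<theta>) * w) ` R \<subseteq> cball 0 \<rho> \<union> cone_region a"
proof -
  have "\<And>w. w \<in> limit_directions R \<Longrightarrow> - w \<notin> limit_directions R"
    using assms limit_directions_subset_asym_dirs by blast
  then obtain p where p: "cmod p = 1" "p \<notin> limit_directions R"
    "\<i> * p \<notin> limit_directions R" "- (\<i> * p) \<notin> limit_directions R"
    using unit_vector_avoiding_quarter_turns[OF closed_limit_directions] by blast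
  obtain \<rho> a where "\<rho> > 0" "a > 1"
    and rotated: "\<And>w. w \<in> R \<Longrightarrow> - cnj p * w \<in> cball 0 \<rho> \<union> cone_region a"
    using rotation_into_cone_region_avoiding[OF p] by blast
  have "exp (\<i> * complex_of_real (Arg2pi (- cnj p))) = - cnj p"
    using p(1) complex_norm_eq_1_exp[of "- cnj p"] by simp
  then have "(\<lambda>w. exp (\<i> * complex_of_real (Arg2pi (- cnj p))) * w) ` R \<subseteq> cball 0 \<rho> \<union> cone_region a"
    using rotated by (simp only: image_subset_iff) blast
  then show ?thesis
    using \<open>\<rho> > 0\<close> \<open>a > 1\<close> Arg2pi_ge_0 Arg2pi_lt_2pi by blast
qed

theorem corollary3:
  fixes g :: "complex \<Rightarrow> complex"
  assumes "harmonic_map g"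
    and "\<not> (\<exists>w. w \<in> asym_dirs (range g) \<and> - w \<in> asym_dirs (range g))"
  shows "\<exists>(\<theta>::real) (\<rho>::real) (a::real). 0 \<le> \<theta> \<and> \<theta> < 2 * pi \<and> \<rho> > 0 \<and> a > 1 \<and>
     range (\<lambda>z. exp (\<i> * complex_of_real \<theta>) * g z) \<subseteq>
       cball 0 \<rho> \<union> ({w. \<bar>Im w\<bar> \<le> a * \<bar>Re w\<bar>} - {w. \<bar>Im w\<bar> \<le> - (1 / a) * Re w})"
  using rotation_into_cone_region[OF assms(2)] by (simp add: image_image cone_region_def)

end
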